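(* If $f,g\in\operatorname{Aut}_{adm}\mathcal M$, then for all $a,b\in\mathbb Z(p)$ with $a\le b<ap^{N_0}$, $$\alpha_{ab0}(fg)=\sum_{c\in\mathbb Z(p)}\alpha_{ac0}(f)\alpha_{cb0}(g),$$ where $fg$ denotes the composition "first $f$, then $g$", i.e. $(fg)(x)=g(f(x))$.
   Context: Let $p$ be a prime, $N_0\in\mathbb N$, $k=\mathbb F_{p^{N_0}}$, $K=k((t))$, $\sigma$ Frobenius, $\mathbb Z(p)=\{a\in\mathbb N:p\nmid a\}$. Let $\mathcal M=I(p)^{ab}\otimes\mathbb F_p$, where $I(p)^{ab}$ is the image of the inertia subgroup in the abelianization of the Galois group of the maximal $p$-extension of $K$, and $\mathcal M_k=\mathcal M\otimes_{\mathbb F_p}k$. There is a standard set of free topological generators $\{D_{an}: a\in\mathbb Z(p), n\in\mathbb Z/N_0\mathbb Z\}$ of the $k$-module $\mathcal M_k$ with $(\sigma\otimes\cdot)$-compatibility $D_{an}=(\mathrm{id}\otimes\sigma^n)D_{a0}$ (namely $D_{an}=\sum_r\sigma^n(\alpha_r)\otimes D_a^{(r)}$ for a $\mathbb Z_p$-basis dual pair; concretely, for any $\mathbb F_p$-linear $f$ extended $k$-linearly, $f(D_{a0})=\sum\alpha_{abn}D_{bn}$ implies $f(D_{am})=\sum\sigma^m(\alpha_{abn})D_{b,n+m}$). For a continuous $\mathbb F_p$-linear automorphism $f$ of $\mathcal M$, extended $k$-linearly to $\mathcal M_k$, define $\alpha_{abn}(f)\in k$ by $f(D_{a0})=\sum_{b\in\mathbb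 Z(p),n\in\mathbb Z/N_0}\alpha_{abn}(f)D_{bn}$, with $\alpha_{abn}(f)=0$ if $p\mid a$ or $p\mid b$. $\operatorname{Aut}_{adm}\mathcal M$ is the set of continuous $\mathbb F_p$-linear automorphisms $f$ of $\mathcal M$ such that $\alpha_{a,b,m\bmod N_0}(f)=0$ whenever $a,b\in\mathbb Z(p)$, $-N_0<m\le0$ and $bp^m<a$. *)

theory Defs
  imports Main "HOL-Library.Groups_Big_Fun" "HOL-Computational_Algebra.Primes"
begin

text \<open>Concrete model of M_k = M \<otimes> k.  An element is the coefficient family
  x (b,n) of the (topological) generators D_{bn}, b in Z(p), n in Z/N0 (represented by
  0..<N0).  Coefficients at invalid indices are normalised to 0.  Since the D_{bn} are free
  topological generators, every coefficient family is an element (product topology).\<close>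

definition Mk :: "nat \<Rightarrow> nat \<Rightarrow> (nat \<times> nat \<Rightarrow> 'k::zero) set" where
  "Mk p N0 = {x. \<forall>b n. (p dvd b \<or> N0 \<le> n) \<longrightarrow> x (b, n) = 0}"

definition gen :: "nat \<Rightarrow> nat \<Rightarrow> nat \<Rightarrow> nat \<Rightarrow> (nat \<times> nat \<Rightarrow> 'k::{zero,one})" where
  "gen p N0 a n = (\<lambda>(b, m). if b = a \<and> m = n \<and> \<not> p dvd a \<and> n < N0 then 1 else 0)"

definition frob :: "nat \<Rightarrow> 'k::field \<Rightarrow> 'k" where
  "frob p x = x ^ p"

text \<open>The semilinear operator id \<otimes> sigma on M_k:
  it sends sum x_{bn} D_{bn} to sum sigma(x_{bn}) D_{b,n+1}.\<close>
definition Phi :: "nat \<Rightarrow> nat \<Rightarrow> (nat \<times> nat \<Rightarrow> 'k::field) \<Rightarrow> (nat \<times> nat \<Rightarrow> 'k)" where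
  "Phi p N0 x = (\<lambda>(b, n). if n < N0 then frob p (x (b, (n + N0 - 1) mod N0)) else 0)"

definition klinear :: "nat \<Rightarrow> nat \<Rightarrow> ((nat \<times> nat \<Rightarrow> 'k::field) \<Rightarrow> (nat \<times> nat \<Rightarrow> 'k)) \<Rightarrow> bool" where
  "klinear p N0 F \<longleftrightarrow>
     (\<forall>x\<in>Mk p N0. \<forall>y\<in>Mk p N0. F (\<lambda>i. x i + y i) = (\<lambda>i. F x i + F y i)) \<and>
     (\<forall>c. \<forall>x\<in>Mk p N0. F (\<lambda>i. c * x i) = (\<lambda>i. c * F x i))"

text \<open>Continuity for the product topology (k discrete): each coordinate of F x depends
  only on finitely many coordinates of x.\<close>
definition kcont :: "nat \<Rightarrow> nat \<Rightarrow> ((nat \<times> nat \<Rightarrow> 'k::field) \<Rightarrow> (nat \<times> nat \<Rightarrow> 'k)) \<Rightarrow> bool" where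
  "kcont p N0 F \<longleftrightarrow>
     (\<forall>j. \<exists>S. finite S \<and>
        (\<forall>x\<in>Mk p N0. \<forall>y\<in>Mk p N0. (\<forall>i\<in>S. x i = y i) \<longrightarrow> F x j = F y j))"

text \<open>k-linear extensions of continuous F_p-linear automorphisms of M: continuous
  k-linear bijections of M_k commuting with id \<otimes> sigma (Galois descent).\<close>
definition ext_aut :: "nat \<Rightarrow> nat \<Rightarrow> ((nat \<times> nat \<Rightarrow> 'k::field) \<Rightarrow> (nat \<times> nat \<Rightarrow> 'k)) \<Rightarrow> bool" where
  "ext_aut p N0 F \<longleftrightarrow>
     bij_betw F (Mk p N0) (Mk p N0) \<and> klinear p N0 F \<and> kcont p N0 F \<and>
     (\<forall>x\<in>Mk p N0. F (Phi p N0 x) = Phi p N0 (F x))"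

definition alpha :: "nat \<Rightarrow> nat \<Rightarrow> ((nat \<times> nat \<Rightarrow> 'k::field) \<Rightarrow> (nat \<times> nat \<Rightarrow> 'k))
     \<Rightarrow> nat \<Rightarrow> nat \<Rightarrow> nat \<Rightarrow> 'k" where
  "alpha p N0 F a b n = (if p dvd a \<or> p dvd b then 0 else F (gen p N0 a 0) (b, n))"

text \<open>Admissibility: alpha_{a,b,m mod N0} = 0 for -N0 < m \<le> 0 and b p^m < a.
  Writing m = -j with 0 \<le> j < N0: the index is (N0 - j) mod N0 and the condition is b < a p^j.\<close>
definition Aut_adm :: "nat \<Rightarrow> nat \<Rightarrow> ((nat \<times> nat \<Rightarrow> 'k::field) \<Rightarrow> (nat \<times> nat \<Rightarrow> 'k)) set" where
  "Aut_adm p N0 = {F. ext_aut p N0 F \<and>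
     (\<forall>a b j. \<not> p dvd a \<and> \<not> p dvd b \<and> j < N0 \<and> b < a * p ^ j \<longrightarrow>
        alpha p N0 F a b ((N0 - j) mod N0) = 0)}"

end

theory Submission
  imports Defs
begin

text \<open>The coefficient of D_{b0} in g(f(D_{a0})) is obtained by expanding f(D_{a0}) = \<Sum> x_{cn} D_{cn}
  and using continuity and linearity of g; since g commutes with id \<otimes> \<sigma>, the coefficient of
  D_{b0} in g(D_{cn}) is \<sigma>^n of alpha_{c,b,-n}(g). For 0 < n < N0 every such cross term vanishes:
  either c < a p^{N0-n}, and then x_{cn} = alpha_{a,c,n}(f) = 0 by admissibility of f, or
  c p^n \<ge> a p^{N0} > b, and then alpha_{c,b,-n}(g) = 0 by admissibility of g.
  Admissibility of g with m = 0 also makes the remaining sum over c finite (c \<le> b).\<close>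

lemma gen_in_Mk: "gen p N0 a n \<in> Mk p N0"
  by (auto simp: Mk_def gen_def)

lemma Phi_in_Mk:
  assumes "p > 0" "x \<in> Mk p N0"
  shows "Phi p N0 (x :: nat \<times> nat \<Rightarrow> 'k::field) \<in> Mk p N0"
  using assms by (auto simp: Mk_def Phi_def frob_def)

lemma funpow_Phi_in_Mk:
  assumes "p > 0" "x \<in> Mk p N0"
  shows "(Phi p N0 ^^ n) (x :: nat \<times> nat \<Rightarrow> 'k::field) \<in> Mk p N0"
  by (induction n) (auto simp: assms Phi_in_Mk)

lemma funpow_frob_zero: "p > 0 \<Longrightarrow> (frob p ^^ n) (0::'k::field) = 0"
  by (induction n) (auto simp: frob_def)

lemma funpow_frob_one: "(frob p ^^ n) (1::'k::field) = 1"
  by (induction n) (auto simp: frob_def)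

lemma funpow_Phi_apply:
  assumes "N0 > 0" "m < N0"
  shows "(Phi p N0 ^^ n) (w :: nat \<times> nat \<Rightarrow> 'k::field) (b, m) =
    (frob p ^^ n) (w (b, nat ((int m - int n) mod int N0)))"
  using assms(2)
proof (induction n arbitrary: m)
  case 0
  then show ?case by simp
next
  case (Suc n)
  define m' where "m' = (m + N0 - 1) mod N0"
  have "m' < N0" using assms(1) by (simp add: m'_def)
  have "int (m + N0 - 1) = (int m - 1) + int N0"
    using assms(1) by simp
  then have "int m' = (int m - 1) mod int N0"
    by (simp add: m'_def zmod_int)
  then have "(int m' - int n) mod int N0 = (int m - int (Suc n)) mod int N0"
    by (simp add: mod_diff_left_eq algebra_simps)
  moreover have "(Phi p N0 ^^ Suc n) w (b, m) = frob p ((Phi p N0 ^^ n) w (b, m'))"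
    using Suc.prems by (simp add: Phi_def m'_def)
  ultimately show ?case
    using Suc.IH[OF \<open>m' < N0\<close>] by (simp del: of_nat_Suc)
qed

lemma nat_minus_mod_eq:
  assumes "m < N0" "n < N0"
  shows "nat ((int m - int n) mod int N0) = (if n \<le> m then m - n else m + N0 - n)"
proof (cases "n \<le> m")
  case True
  then show ?thesis using assms by (simp add: mod_pos_pos_trivial of_nat_diff)
next
  case False
  have "(int m - int n) mod int N0 = (int m - int n + int N0) mod int N0" by simp
  also have "\<dots> = int m - int n + int N0"
    using assms False by (intro mod_pos_pos_trivial) auto
  finally show ?thesis using False by simp
qed

lemma gen_eq_funpow_Phi:
  assumes "p > 0" "n < N0"
  shows "gen p N0 c n = (Phi p N0 ^^ n) (gen p N0 c 0 :: nat \<times> nat \<Rightarrow> 'k::field)"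
proof
  fix j :: "nat \<times> nat"
  obtain b m where j: "j = (b, m)" by (cases j)
  show "gen p N0 c n j = (Phi p N0 ^^ n) (gen p N0 c 0) j"
  proof (cases "m < N0")
    case True
    then show ?thesis using assms
      by (auto simp: j funpow_Phi_apply gen_def nat_minus_mod_eq funpow_frob_zero funpow_frob_one)
  next
    case False
    then show ?thesis
      by (cases n) (auto simp: j gen_def Phi_def)
  qed
qed

lemma klinear_zero:
  assumes "klinear p N0 F"
  shows "F (\<lambda>i. 0) = (\<lambda>i. 0 :: 'k::field)"
proof -
  have scale: "\<forall>c. \<forall>x\<in>Mk p N0. F (\<lambda>i. c * x i) = (\<lambda>i. c * F x i)"
    using assms unfolding klinear_def by blast
  have "F (\<lambda>i. 0 * (\<lambda>i. 0::'k) i) = (\<lambda>i. 0 * F (\<lambda>i. 0) i)"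
    by (rule scale[rule_format]) (simp add: Mk_def)
  then show ?thesis by simp
qed

lemma klinear_sum:
  assumes "klinear p N0 F" "finite T" "\<And>i. i \<in> T \<Longrightarrow> z i \<in> Mk p N0"
  shows "F (\<lambda>j. \<Sum>i\<in>T. c i * z i j) = (\<lambda>j. \<Sum>i\<in>T. c i * F (z i) j :: 'k::field)"
  using assms(2,3)
proof (induction T rule: finite_induct)
  case empty
  then show ?case using klinear_zero[OF assms(1)] by simp
next
  case (insert t T)
  have sum_in: "(\<lambda>j. \<Sum>i\<in>T. c i * z i j) \<in> Mk p N0"
    using insert by (auto simp: Mk_def)
  have term_in: "(\<lambda>j. c t * z t j) \<in> Mk p N0"
    using insert by (auto simp: Mk_def)
  have "F (\<lambda>j. \<Sum>i\<in>insert t T. c i * z i j) = F (\<lambda>j. c t * z t j + (\<Sum>i\<in>T. c i * z i j))"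
    using insert by simp
  also have "\<dots> = (\<lambda>j. F (\<lambda>j. c t * z t j) j + F (\<lambda>j. \<Sum>i\<in>T. c i * z i j) j)"
    using assms(1) term_in sum_in unfolding klinear_def by simp
  also have "F (\<lambda>j. c t * z t j) = (\<lambda>j. c t * F (z t) j)"
    using assms(1) insert unfolding klinear_def by blast
  finally show ?case using insert by simp
qed

lemma sum_gen_eq:
  assumes "x \<in> Mk p N0" "finite T"
  shows "(\<lambda>j. \<Sum>i\<in>T. x i * gen p N0 (fst i) (snd i) j) = (\<lambda>j. if j \<in> T then x j else (0::'k::field))"
proof
  fix j :: "nat \<times> nat"
  have "x i * gen p N0 (fst i) (snd i) j = (if i = j then x j else 0)" for i
    using assms(1) by (cases i, cases j) (auto simp: gen_def Mk_def)
  then show "(\<Sum>i\<in>T. x i * gen p N0 (fst i) (snd i) j) = (if j \<in> T then x j else 0)"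
    using assms(2) by (simp add: sum.delta')
qed

text \<open>Continuity lets the expansion of x in the topological basis D_{cn} be cut off at a
  finite set, on which linearity applies.\<close>

lemma kcont_klinear_expand:
  fixes F :: "(nat \<times> nat \<Rightarrow> 'k::field) \<Rightarrow> (nat \<times> nat \<Rightarrow> 'k)"
  assumes "klinear p N0 F" "kcont p N0 F" "x \<in> Mk p N0" "finite A"
    and vanish: "\<And>i. i \<notin> A \<Longrightarrow> x i * F (gen p N0 (fst i) (snd i)) j = 0"
  shows "F x j = (\<Sum>i\<in>A. x i * F (gen p N0 (fst i) (snd i)) j)"
proof -
  have "\<exists>S. finite S \<and> (\<forall>u\<in>Mk p N0. \<forall>v\<in>Mk p N0. (\<forall>i\<in>S. u i = v i) \<longrightarrow> F u j = F v j)"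
    using assms(2) unfolding kcont_def by (rule spec)
  then obtain S where "finite S"
    and S: "\<forall>u\<in>Mk p N0. \<forall>v\<in>Mk p N0. (\<forall>i\<in>S. u i = v i) \<longrightarrow> F u j = F v j"
    by blast
  define T where "T = S \<union> A"
  have "finite T" using \<open>finite S\<close> assms(4) by (simp add: T_def)
  define y where "y = (\<lambda>j. \<Sum>i\<in>T. x i * gen p N0 (fst i) (snd i) j)"
  have y_eq: "y = (\<lambda>j. if j \<in> T then x j else 0)"
    unfolding y_def by (rule sum_gen_eq[OF assms(3) \<open>finite T\<close>])
  have "y \<in> Mk p N0" using assms(3) by (auto simp: Mk_def y_eq)
  moreover have "\<forall>i\<in>S. x i = y i" by (simp add: y_eq T_def)
  ultimately have "F x j = F y j"
    by (intro S[rule_format, OF assms(3)]) simp_all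
  also have "F y j = (\<Sum>i\<in>T. x i * F (gen p N0 (fst i) (snd i)) j)"
    unfolding y_def by (simp only: klinear_sum[OF assms(1) \<open>finite T\<close> gen_in_Mk])
  also have "\<dots> = (\<Sum>i\<in>A. x i * F (gen p N0 (fst i) (snd i)) j)"
    using \<open>finite T\<close> vanish by (intro sum.mono_neutral_right) (auto simp: T_def)
  finally show ?thesis .
qed

lemma ext_aut_in_Mk:
  assumes "ext_aut p N0 F" "x \<in> Mk p N0"
  shows "F x \<in> Mk p N0"
proof -
  have "bij_betw F (Mk p N0) (Mk p N0)" using assms(1) by (simp add: ext_aut_def)
  then show ?thesis using assms(2) by (rule bij_betw_apply)
qed

lemma ext_aut_funpow_Phi:
  assumes "ext_aut p N0 F" "p > 0" "x \<in> Mk p N0"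
  shows "F ((Phi p N0 ^^ n) x) = (Phi p N0 ^^ n) (F x)"
proof (induction n)
  case (Suc n)
  have "\<forall>y\<in>Mk p N0. F (Phi p N0 y) = Phi p N0 (F y)"
    using assms(1) by (simp add: ext_aut_def)
  then have "F (Phi p N0 ((Phi p N0 ^^ n) x)) = Phi p N0 (F ((Phi p N0 ^^ n) x))"
    using funpow_Phi_in_Mk[OF assms(2,3)] by blast
  then show ?case using Suc by simp
qed simp

lemma ext_aut_gen_coeff:
  assumes "ext_aut p N0 F" "p > 0" "n < N0"
  shows "F (gen p N0 c n) (b, 0) = (frob p ^^ n) (F (gen p N0 c 0) (b, (N0 - n) mod N0))"
proof -
  have "F (gen p N0 c n) = (Phi p N0 ^^ n) (F (gen p N0 c 0))"
    by (subst gen_eq_funpow_Phi[OF assms(2,3)]) (rule ext_aut_funpow_Phi[OF assms(1,2) gen_in_Mk])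
  moreover have "nat ((int 0 - int n) mod int N0) = (N0 - n) mod N0"
    using nat_minus_mod_eq[of 0 N0 n] assms(3) by (cases "n = 0") auto
  moreover have "0 < N0" using assms(3) by simp
  ultimately show ?thesis
    using funpow_Phi_apply[where m=0 and n=n and p=p and w="F (gen p N0 c 0)" and b=b] by simp
qed

lemma Aut_adm_coeff_vanish:
  assumes "F \<in> Aut_adm p N0" "\<not> p dvd a" "\<not> p dvd b" "j < N0" "b < a * p ^ j"
  shows "F (gen p N0 a 0) (b, (N0 - j) mod N0) = 0"
  using assms by (auto simp: Aut_adm_def alpha_def)

lemma Aut_adm_cross_term_vanish:
  assumes "f \<in> Aut_adm p N0" "g \<in> Aut_adm p N0" "prime p"
    and "\<not> p dvd a" "\<not> p dvd b" "b < a * p ^ N0" "0 < n" "n < N0"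
  shows "f (gen p N0 a 0) (c, n) * g (gen p N0 c n) (b, 0) = 0"
proof (cases "p dvd c")
  case True
  have "f (gen p N0 a 0) \<in> Mk p N0"
    using assms(1) by (intro ext_aut_in_Mk[OF _ gen_in_Mk]) (simp add: Aut_adm_def)
  then show ?thesis using True by (simp add: Mk_def)
next
  case False
  show ?thesis
  proof (cases "c < a * p ^ (N0 - n)")
    case True
    then have "f (gen p N0 a 0) (c, (N0 - (N0 - n)) mod N0) = 0"
      using assms False by (intro Aut_adm_coeff_vanish) auto
    then show ?thesis using assms(8) by simp
  next
    case False
    have "a * p ^ N0 = a * p ^ (N0 - n) * p ^ n"
      using assms(8) by (simp flip: power_add)
    also have "\<dots> \<le> c * p ^ n" using False by simp
    finally have "g (gen p N0 c 0) (b, (N0 - n) mod N0) = 0"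
      using assms \<open>\<not> p dvd c\<close> by (intro Aut_adm_coeff_vanish) auto
    moreover have "g (gen p N0 c n) (b, 0) = (frob p ^^ n) (g (gen p N0 c 0) (b, (N0 - n) mod N0))"
      using assms(2,3,8) by (intro ext_aut_gen_coeff) (simp_all add: Aut_adm_def prime_gt_0_nat)
    ultimately show ?thesis
      using assms(3) by (simp add: funpow_frob_zero prime_gt_0_nat)
  qed
qed

lemma Aut_adm_coeff_vanish_below:
  assumes "F \<in> Aut_adm p N0" "0 < N0" "\<not> p dvd c" "\<not> p dvd b" "b < c"
  shows "F (gen p N0 c 0) (b, 0) = 0"
  using Aut_adm_coeff_vanish[OF assms(1,3,4,2)] assms(5) by simp

lemma Aut_adm_comp_gen_coeff:
  assumes "f \<in> Aut_adm p N0" "g \<in> Aut_adm p N0" "prime p" "0 < N0"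
    and "\<not> p dvd a" "\<not> p dvd b" "b < a * p ^ N0"
  shows "g (f (gen p N0 a 0)) (b, 0) = (\<Sum>c\<le>b. f (gen p N0 a 0) (c, 0) * g (gen p N0 c 0) (b, 0))"
proof -
  define x where "x = f (gen p N0 a 0)"
  have g: "ext_aut p N0 g" using assms(2) by (simp add: Aut_adm_def)
  have "x \<in> Mk p N0"
    unfolding x_def using assms(1) by (intro ext_aut_in_Mk[OF _ gen_in_Mk]) (simp add: Aut_adm_def)
  then have x_out: "x (c, n) = 0" if "p dvd c \<or> N0 \<le> n" for c n
    using that by (auto simp: Mk_def)
  have "g x (b, 0) = (\<Sum>i\<in>(\<lambda>c. (c, 0)) ` {..b}. x i * g (gen p N0 (fst i) (snd i)) (b, 0))"
  proof (rule kcont_klinear_expand)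
    fix i :: "nat \<times> nat" assume "i \<notin> (\<lambda>c. (c, 0)) ` {..b}"
    moreover obtain c n where i: "i = (c, n)" by (cases i)
    ultimately have "n \<noteq> 0 \<or> b < c" by auto
    then consider "p dvd c \<or> N0 \<le> n" | "\<not> p dvd c" "b < c" "n = 0" | "0 < n" "n < N0"
      by (cases "p dvd c \<or> N0 \<le> n") auto
    then show "x i * g (gen p N0 (fst i) (snd i)) (b, 0) = 0"
    proof cases
      case 1
      then show ?thesis by (simp add: i x_out)
    next
      case 2
      then show ?thesis by (simp add: i Aut_adm_coeff_vanish_below[OF assms(2,4) _ assms(6)])
    next
      case 3
      then show ?thesis
        unfolding i x_def fst_conv snd_conv by (rule Aut_adm_cross_term_vanish[OF assms(1-3,5-7)])
    qed
  qed (use g \<open>x \<in> Mk p N0\<close> in \<open>simp_all add: ext_aut_def\<close>)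
  then show ?thesis by (simp add: sum.reindex inj_on_def x_def)
qed

lemma card_UNIV_field_ge_2: "card (UNIV :: 'k::{finite,field} set) \<ge> 2"
proof -
  have "{0, 1} \<subseteq> (UNIV :: 'k set)" by simp
  then have "card {0, 1 :: 'k} \<le> card (UNIV :: 'k set)" by (rule card_mono[OF finite_UNIV])
  then show ?thesis by simp
qed

theorem proposition2p2:
  fixes p N0 a b :: nat
    and f g :: "(nat \<times> nat \<Rightarrow> 'k::{finite,field}) \<Rightarrow> (nat \<times> nat \<Rightarrow> 'k)"
  assumes "prime p"
    and "card (UNIV :: 'k set) = p ^ N0"
    and "f \<in> Aut_adm p N0"
    and "g \<in> Aut_adm p N0"
    and "\<not> p dvd a" and "\<not> p dvd b"
    and "a \<le> b" and "b < a * p ^ N0"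
  shows "alpha p N0 (g \<circ> f) a b 0 =
    Sum_any (\<lambda>c. if p dvd c then 0 else alpha p N0 f a c 0 * alpha p N0 g c b 0)"
proof -
  have "N0 > 0" using assms(2) card_UNIV_field_ge_2[where 'k='k] by (cases N0) auto
  have "f (gen p N0 a 0) \<in> Mk p N0"
    using assms(3) by (intro ext_aut_in_Mk[OF _ gen_in_Mk]) (simp add: Aut_adm_def)
  then have f_out: "f (gen p N0 a 0) (c, 0) = 0" if "p dvd c" for c
    using that by (simp add: Mk_def)
  have "alpha p N0 (g \<circ> f) a b 0 = g (f (gen p N0 a 0)) (b, 0)"
    using assms(5,6) by (simp add: alpha_def)
  also have "\<dots> = (\<Sum>c\<le>b. f (gen p N0 a 0) (c, 0) * g (gen p N0 c 0) (b, 0))"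
    using assms(1,3-6,8) \<open>N0 > 0\<close> by (intro Aut_adm_comp_gen_coeff)
  also have "\<dots> = (\<Sum>c\<le>b. if p dvd c then 0 else alpha p N0 f a c 0 * alpha p N0 g c b 0)"
    using assms(5,6) f_out by (intro sum.cong) (simp_all add: alpha_def)
  also have "\<dots> = Sum_any (\<lambda>c. if p dvd c then 0 else alpha p N0 f a c 0 * alpha p N0 g c b 0)"
    using Aut_adm_coeff_vanish_below[OF assms(4) \<open>N0 > 0\<close> _ assms(6)]
    by (intro Sum_any.expand_superset[symmetric]) (auto simp: alpha_def, meson not_le)
  finally show ?thesis .
qed

end
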